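(* Let $V\subseteq\mathcal{V}$ be a set of interpretations. There is an ADF $D$ with $\mathrm{prf}(D)=V$ iff there is an adm-characterization for some $V'\subseteq\mathcal{V}$ with $V\subseteq V'$ and $\max_{\leq_i}(V')=V$, where $\max_{\leq_i}(V')$ denotes the set of $\leq_i$-maximal elements of $V'$.
   Context: Let $A$ be a fixed finite set of statements. An interpretation is a mapping $v:A\to\{\mathbf{t},\mathbf{f},\mathbf{u}\}$; $\mathcal{V}$ is the set of all interpretations and $\mathcal{V}_2$ the set of two-valued ones. The information ordering is $\mathbf{u}<_i\mathbf{t}$, $\mathbf{u}<_i\mathbf{f}$, extended pointwise. For $v\in\mathcal{V}$, $[v]_2$ is the set of two-valued interpretations $w$ with $v\leq_i w$. An ADF is $D=(A,L,C)$ where each statement $a$ has an acceptance formula $\varphi_a$ over its parents. The operator $\Gamma_D$ maps $v$ to the interpretation assigning to each $a$ the greatest lower bound w.r.t. $\leq_i$ (consensus: $\mathbf{t}$ if all are $\mathbf{t}$, $\mathbf{f}$ if all are $\mathbf{f}$, otherwise $\mathbf{u}$) of $\{w(\varphi_a)\mid w\in[v]_2\}$. $v$ is admissible iff $v\leq_i\Gamma_D(v)$; preferred iff it is $\leq_i$-maximal admissible; $\mathrm{prf}(D)$ is the set of preferred interpretations. A function $f:\mathcal{V}_2\to\mathcal{V}_2$ is an adm-characterization of a set $V'$ iff for each $v\in\mathcal{V}$: $v\in V'$ iff for every $a\in A$, $v(a)\neq\mathbf{u}$ implies $f(v_2)(a)=v(a)$ for all $v_2\in[v]_2$. (It is known that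 a set is the admissible semantics of some ADF iff it has an adm-characterization.) *)

theory Defs
  imports Main
begin

(* Statements: a finite type 'a (the fixed finite set A is UNIV). *)

datatype tv = Tt | Ff | Uu

type_synonym 'a interp = "'a \<Rightarrow> tv"

definition two_valued :: "'a interp set" where
  "two_valued = {v. \<forall>a. v a \<noteq> Uu}"

definition info_le :: "'a interp \<Rightarrow> 'a interp \<Rightarrow> bool" where
  "info_le v w \<longleftrightarrow> (\<forall>a. v a = Uu \<or> v a = w a)"

definition completions :: "'a interp \<Rightarrow> 'a interp set" where
  "completions v = {w \<in> two_valued. info_le v w}"

datatype 'a form = Atom 'a | Top | Bot | Neg "'a form"
  | Conj "'a form" "'a form" | Disj "'a form" "'a form"
  | Impl "'a form" "'a form" | Equiv "'a form" "'a form"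

fun atoms :: "'a form \<Rightarrow> 'a set" where
  "atoms (Atom a) = {a}"
| "atoms Top = {}"
| "atoms Bot = {}"
| "atoms (Neg p) = atoms p"
| "atoms (Conj p q) = atoms p \<union> atoms q"
| "atoms (Disj p q) = atoms p \<union> atoms q"
| "atoms (Impl p q) = atoms p \<union> atoms q"
| "atoms (Equiv p q) = atoms p \<union> atoms q"

fun holds :: "'a interp \<Rightarrow> 'a form \<Rightarrow> bool" where
  "holds w (Atom a) = (w a = Tt)"
| "holds w Top = True"
| "holds w Bot = False"
| "holds w (Neg p) = (\<not> holds w p)"
| "holds w (Conj p q) = (holds w p \<and> holds w q)"
| "holds w (Disj p q) = (holds w p \<or> holds w q)"
| "holds w (Impl p q) = (holds w p \<longrightarrow> holds w q)"
| "holds w (Equiv p q) = (holds w p \<longleftrightarrow> holds w q)"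

(* ADF D = (A, L, C): links L and acceptance formulas over parents *)
type_synonym 'a adf = "('a \<times> 'a) set \<times> ('a \<Rightarrow> 'a form)"

definition is_adf :: "'a adf \<Rightarrow> bool" where
  "is_adf D \<longleftrightarrow> (\<forall>a. atoms (snd D a) \<subseteq> {b. (b, a) \<in> fst D})"

(* consensus (glb w.r.t. info ordering) of a set of truth values from {t,f} *)
definition consensus :: "bool set \<Rightarrow> tv" where
  "consensus S = (if S \<subseteq> {True} then Tt else if S \<subseteq> {False} then Ff else Uu)"

definition Gamma :: "'a adf \<Rightarrow> 'a interp \<Rightarrow> 'a interp" where
  "Gamma D v = (\<lambda>a. consensus {holds w (snd D a) | w. w \<in> completions v})"

definition admissible :: "'a adf \<Rightarrow> 'a interp \<Rightarrow> bool" where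
  "admissible D v \<longleftrightarrow> info_le v (Gamma D v)"

definition info_maximal :: "'a interp set \<Rightarrow> 'a interp set" where
  "info_maximal V' = {v \<in> V'. \<forall>w \<in> V'. info_le v w \<longrightarrow> w = v}"

definition preferred :: "'a adf \<Rightarrow> 'a interp set" where
  "preferred D = info_maximal {v. admissible D v}"

definition adm_characterization :: "('a interp \<Rightarrow> 'a interp) \<Rightarrow> 'a interp set \<Rightarrow> bool" where
  "adm_characterization f V' \<longleftrightarrow>
     (\<forall>v2 \<in> two_valued. f v2 \<in> two_valued) \<and>
     (\<forall>v. v \<in> V' \<longleftrightarrow>
        (\<forall>a. v a \<noteq> Uu \<longrightarrow> (\<forall>v2 \<in> completions v. f v2 a = v a)))"

end

theory Submission
  imports Defs
begin

text \<open>On a two-valued interpretation \<open>\<Gamma>\<^sub>D\<close> simply evaluates the acceptance formulas, and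
  \<open>v\<close> is admissible iff every completion of \<open>v\<close> is mapped by \<open>\<Gamma>\<^sub>D\<close> to a value agreeing with
  \<open>v\<close> wherever \<open>v\<close> is defined; so \<open>\<Gamma>\<^sub>D\<close> is an adm-characterization of the admissible
  interpretations of \<open>D\<close>. Conversely, over a finite set of statements every map on two-valued
  interpretations is \<open>\<Gamma>\<^sub>D\<close> for some ADF, since every Boolean function is expressed by a
  formula (Shannon expansion). An adm-characterization determines the characterized set, so the
  admissible semantics of that ADF is the given set and its preferred semantics are the maximal
  elements.\<close>

lemma completions_nonempty: "completions v \<noteq> {}"
proof -
  have "(\<lambda>a. if v a = Uu then Tt else v a) \<in> completions v"
    by (auto simp: completions_def two_valued_def info_le_def)
  then show ?thesis by blast
qed

lemma completions_two_valued: "w \<in> two_valued \<Longrightarrow> completions w = {w}"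
  by (auto simp: completions_def two_valued_def info_le_def)

lemma consensus_singleton: "consensus {b} = (if b then Tt else Ff)"
  by (simp add: consensus_def)

lemma consensus_eq_iff:
  assumes "S \<noteq> {}" and "t \<noteq> Uu"
  shows "consensus S = t \<longleftrightarrow> (\<forall>b\<in>S. consensus {b} = t)"
  using assms by (cases t) (auto simp: consensus_def)

lemma Gamma_two_valued:
  "w \<in> two_valued \<Longrightarrow> Gamma D w a = (if holds w (snd D a) then Tt else Ff)"
  by (simp add: Gamma_def completions_two_valued consensus_singleton)

lemma Gamma_in_two_valued: "w \<in> two_valued \<Longrightarrow> Gamma D w \<in> two_valued"
  by (simp add: two_valued_def Gamma_two_valued)

lemma admissible_iff_completions:
  "admissible D v \<longleftrightarrow> (\<forall>a. v a \<noteq> Uu \<longrightarrow> (\<forall>w\<in>completions v. Gamma D w a = v a))"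
proof -
  have "Gamma D v a = v a \<longleftrightarrow> (\<forall>w\<in>completions v. Gamma D w a = v a)" if "v a \<noteq> Uu" for a
  proof -
    let ?S = "{holds w (snd D a) | w. w \<in> completions v}"
    have "?S \<noteq> {}"
      using completions_nonempty by blast
    then have "Gamma D v a = v a \<longleftrightarrow> (\<forall>b\<in>?S. consensus {b} = v a)"
      unfolding Gamma_def using that by (rule consensus_eq_iff)
    also have "\<dots> \<longleftrightarrow> (\<forall>w\<in>completions v. consensus {holds w (snd D a)} = v a)"
      by blast
    also have "\<dots> \<longleftrightarrow> (\<forall>w\<in>completions v. Gamma D w a = v a)"
      by (simp add: completions_def Gamma_two_valued consensus_singleton)
    finally show ?thesis .
  qed
  then show ?thesis
    unfolding admissible_def info_le_def by (metis (mono_tags))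
qed

lemma adm_characterization_Gamma: "adm_characterization (Gamma D) {v. admissible D v}"
  by (simp add: adm_characterization_def Gamma_in_two_valued admissible_iff_completions)

lemma adm_characterization_cong:
  assumes "adm_characterization f V" and "\<And>w. w \<in> two_valued \<Longrightarrow> g w = f w"
  shows "adm_characterization g V"
proof -
  have "\<And>v. \<forall>w\<in>completions v. g w = f w"
    using assms(2) by (simp add: completions_def)
  with assms(1) show ?thesis
    by (simp add: adm_characterization_def assms(2))
qed

lemma adm_characterization_unique:
  "adm_characterization f V \<Longrightarrow> adm_characterization f W \<Longrightarrow> V = W"
  by (auto simp: adm_characterization_def)

lemma exists_formula_of_finite_support:
  assumes "finite S" and "\<And>w w'. (\<forall>a\<in>S. w a = w' a) \<Longrightarrow> P w = P w'"
  shows "\<exists>\<phi>. \<forall>w\<in>two_valued. holds w \<phi> = P w"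
  using assms
proof (induction S arbitrary: P rule: finite_induct)
  case empty
  then have "P w = P (\<lambda>_. Tt)" for w by blast
  then show ?case
    by (cases "P (\<lambda>_. Tt)") (auto intro: exI[of _ Top] exI[of _ Bot])
next
  case (insert x S)
  have IH: "\<exists>\<phi>. \<forall>w\<in>two_valued. holds w \<phi> = P (w(x := t))" for t
  proof (rule insert.IH)
    fix w w' :: "'a interp"
    assume "\<forall>a\<in>S. w a = w' a"
    then show "P (w(x := t)) = P (w'(x := t))"
      by (intro insert.prems) simp
  qed
  obtain \<phi>\<^sub>t where \<phi>\<^sub>t: "\<forall>w\<in>two_valued. holds w \<phi>\<^sub>t = P (w(x := Tt))"
    using IH by blast
  obtain \<phi>\<^sub>f where \<phi>\<^sub>f: "\<forall>w\<in>two_valued. holds w \<phi>\<^sub>f = P (w(x := Ff))"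
    using IH by blast
  have "holds w (Disj (Conj (Atom x) \<phi>\<^sub>t) (Conj (Neg (Atom x)) \<phi>\<^sub>f)) = P w"
    if w: "w \<in> two_valued" for w
  proof (cases "w x")
    case Tt
    then have "w(x := Tt) = w" by auto
    then show ?thesis using Tt \<phi>\<^sub>t w by simp
  next
    case Ff
    then have "w(x := Ff) = w" by auto
    then show ?thesis using Ff \<phi>\<^sub>f w by simp
  next
    case Uu
    then show ?thesis using w by (simp add: two_valued_def)
  qed
  then show ?case by blast
qed

lemma exists_formula:
  fixes P :: "('a::finite) interp \<Rightarrow> bool"
  shows "\<exists>\<phi>. \<forall>w\<in>two_valued. holds w \<phi> = P w"
  by (rule exists_formula_of_finite_support[of UNIV]) (simp_all add: fun_eq_iff [symmetric])

lemma exists_adf_Gamma: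
  fixes f :: "('a::finite) interp \<Rightarrow> 'a interp"
  assumes "\<And>w. w \<in> two_valued \<Longrightarrow> f w \<in> two_valued"
  shows "\<exists>D. is_adf D \<and> (\<forall>w\<in>two_valued. Gamma D w = f w)"
proof -
  obtain \<Phi> where \<Phi>: "\<And>a w. w \<in> two_valued \<Longrightarrow> holds w (\<Phi> a) = (f w a = Tt)"
    using exists_formula[of "\<lambda>w. f w a = Tt" for a] by metis
  define D :: "'a adf" where "D = (UNIV, \<Phi>)"
  have "is_adf D" by (simp add: is_adf_def D_def)
  moreover have "Gamma D w a = f w a" if "w \<in> two_valued" for w a
    using \<Phi>[OF that, of a] assms[OF that] that
    by (cases "f w a") (auto simp: Gamma_two_valued D_def two_valued_def)
  ultimately show ?thesis
    by (intro exI[of _ D]) (simp add: fun_eq_iff)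
qed

theorem corollary1:
  fixes V :: "('a::finite) interp set"
  shows "(\<exists>D. is_adf D \<and> preferred D = V) \<longleftrightarrow>
         (\<exists>V' f. V \<subseteq> V' \<and> info_maximal V' = V \<and> adm_characterization f V')"
proof
  assume "\<exists>D. is_adf D \<and> preferred D = V"
  then obtain D where "info_maximal {v. admissible D v} = V"
    by (auto simp: preferred_def)
  moreover have "info_maximal {v. admissible D v} \<subseteq> {v. admissible D v}"
    by (auto simp: info_maximal_def)
  ultimately show "\<exists>V' f. V \<subseteq> V' \<and> info_maximal V' = V \<and> adm_characterization f V'"
    using adm_characterization_Gamma by (intro exI[of _ "{v. admissible D v}"] exI[of _ "Gamma D"]) simp
next
  assume "\<exists>V' f. V \<subseteq> V' \<and> info_maximal V' = V \<and> adm_characterization f V'"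
  then obtain V' f where max: "info_maximal V' = V" and ac: "adm_characterization f V'"
    by blast
  obtain D where "is_adf D" and Gamma_eq: "\<forall>w\<in>two_valued. Gamma D w = f w"
    using exists_adf_Gamma[of f] ac by (auto simp: adm_characterization_def)
  have "adm_characterization (Gamma D) V'"
    using adm_characterization_cong[OF ac] Gamma_eq by blast
  then have "{v. admissible D v} = V'"
    using adm_characterization_unique adm_characterization_Gamma by blast
  then have "preferred D = V"
    using max by (simp add: preferred_def)
  with \<open>is_adf D\<close> show "\<exists>D. is_adf D \<and> preferred D = V"
    by (intro exI[of _ D] conjI)
qed

end
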